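(* Let $P$ be an orthogonal polygon without holes and let $S$ be a maximal square of $P$ with side length $d$ such that: the top and bottom sides of $S$ overlap with horizontal edges $e_1$ and $e_2$ of $P$ respectively; $e_1$ contains the top-right corner of $S$; $e_2$ contains the bottom-right corner of $S$; and there is a strip $Y$ between $e_1$ and $e_2$ whose right side is at distance more than $d$ from the right side of $S$. Let $S'$ be the reflection of $S$ in its right side. Then for every partial solution $\mathcal{R}$ with $S\in\mathcal{R}$ and such that no rec-pack of $\mathcal{R}$ overlaps $S'$, the set $\mathcal{R}\cup\{S'\}$ is also a partial solution.
   Context: $P$ is a simple polygon with integer vertex coordinates and axis-parallel edges. A valid square is an axis-parallel square contained in $P$; it is maximal if no larger-area valid square contains it. A strip of $P$ is a maximal axis-parallel non-square rectangular region lying inside $P$ such that each of its two longer sides is completely contained in an edge of $P$. A rec-pack is an axis-parallel rectangle contained in $P$ of dimensions $t\times \eta t$ or $\eta t\times t$ with $\eta\in\mathbb{N}$ (every valid square is a rec-pack); its extraction $\mathsf{ext}(R)$ is the set of the $\eta$ side-$t$ squares tiling $R$. A set $\mathcal{R}'$ of rec-packs is a minimum covering of $P$ if $\bigcup_{R\in\mathcal{R}'}\mathsf{ext}(R)$ is a minimum-cardinality set of valid squares with union $P$ and distinct rec-packs have disjoint extractions. A partial solution is a set of rec-packs contained in some minimum covering. *)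

theory Defs
  imports "HOL-Analysis.Analysis"
begin

type_synonym point = "real \<times> real"

definition ipt :: "int \<times> int \<Rightarrow> point" where
  "ipt v = (real_of_int (fst v), real_of_int (snd v))"

fun poly_path :: "point list \<Rightarrow> real \<Rightarrow> point" where
  "poly_path [] = linepath 0 0"
| "poly_path [a] = linepath a a"
| "poly_path [a, b] = linepath a b"
| "poly_path (a # b # c # xs) = linepath a b +++ poly_path (b # c # xs)"

definition boundary_path :: "(int \<times> int) list \<Rightarrow> real \<Rightarrow> point" where
  "boundary_path vs = poly_path (map ipt vs @ [ipt (hd vs)])"

definition nxt :: "(int \<times> int) list \<Rightarrow> nat \<Rightarrow> int \<times> int" where
  "nxt vs i = vs ! (Suc i mod length vs)"

definition horiz_pair :: "int \<times> int \<Rightarrow> int \<times> int \<Rightarrow> bool" where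
  "horiz_pair p q \<longleftrightarrow> snd p = snd q"

text \<open>Orthogonal simple polygon: consecutive vertices are distinct and joined by
  axis-parallel edges that alternate horizontal/vertical (so each edge is a maximal
  straight piece of the boundary), and the boundary is a simple closed curve.\<close>
definition ortho_polygon :: "(int \<times> int) list \<Rightarrow> bool" where
  "ortho_polygon vs \<longleftrightarrow> length vs \<ge> 4 \<and>
     (\<forall>i < length vs. vs ! i \<noteq> nxt vs i \<and>
        (fst (vs ! i) = fst (nxt vs i) \<or> snd (vs ! i) = snd (nxt vs i)) \<and>
        (horiz_pair (vs ! i) (nxt vs i) \<longleftrightarrow>
           \<not> horiz_pair (nxt vs i) (nxt vs (Suc i mod length vs)))) \<and>
     simple_path (boundary_path vs)"

definition polygon_region :: "(int \<times> int) list \<Rightarrow> point set" where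
  "polygon_region vs = path_image (boundary_path vs) \<union> inside (path_image (boundary_path vs))"

definition poly_edges :: "(int \<times> int) list \<Rightarrow> point set set" where
  "poly_edges vs = {closed_segment (ipt (vs ! i)) (ipt (nxt vs i)) | i. i < length vs}"

definition horizontal :: "point set \<Rightarrow> bool" where
  "horizontal e \<longleftrightarrow> (\<exists>c. \<forall>p\<in>e. snd p = c)"

definition rect :: "real \<Rightarrow> real \<Rightarrow> real \<Rightarrow> real \<Rightarrow> point set" where
  "rect x y w h = {x..x+w} \<times> {y..y+h}"

definition top_side :: "real \<Rightarrow> real \<Rightarrow> real \<Rightarrow> real \<Rightarrow> point set" where
  "top_side x y w h = {x..x+w} \<times> {y+h}"

definition bottom_side :: "real \<Rightarrow> real \<Rightarrow> real \<Rightarrow> real \<Rightarrow> point set" where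
  "bottom_side x y w h = {x..x+w} \<times> {y}"

definition left_side :: "real \<Rightarrow> real \<Rightarrow> real \<Rightarrow> real \<Rightarrow> point set" where
  "left_side x y w h = {x} \<times> {y..y+h}"

definition right_side :: "real \<Rightarrow> real \<Rightarrow> real \<Rightarrow> real \<Rightarrow> point set" where
  "right_side x y w h = {x+w} \<times> {y..y+h}"

definition is_square :: "point set \<Rightarrow> bool" where
  "is_square Q \<longleftrightarrow> (\<exists>x y t. t > 0 \<and> Q = rect x y t t)"

definition valid_square :: "point set \<Rightarrow> point set \<Rightarrow> bool" where
  "valid_square P Q \<longleftrightarrow> is_square Q \<and> Q \<subseteq> P"

definition maximal_square :: "point set \<Rightarrow> point set \<Rightarrow> bool" where
  "maximal_square P S \<longleftrightarrow> valid_square P S \<and>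
     (\<forall>x y t x' y' t'. S = rect x y t t \<and> t > 0 \<and> t' > 0 \<and>
        valid_square P (rect x' y' t' t') \<and> S \<subseteq> rect x' y' t' t' \<longrightarrow> t' * t' \<le> t * t)"

definition rec_pack :: "point set \<Rightarrow> point set \<Rightarrow> bool" where
  "rec_pack P R \<longleftrightarrow> R \<subseteq> P \<and>
     (\<exists>x y t (\<eta>::nat). t > 0 \<and> \<eta> \<ge> 1 \<and>
        (R = rect x y t (real \<eta> * t) \<or> R = rect x y (real \<eta> * t) t))"

definition ext :: "point set \<Rightarrow> point set set" where
  "ext R = {Q. \<exists>x y t (\<eta>::nat) i. t > 0 \<and> \<eta> \<ge> 1 \<and> i < \<eta> \<and>
       ((R = rect x y t (real \<eta> * t) \<and> Q = rect x (y + real i * t) t t) \<or>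
        (R = rect x y (real \<eta> * t) t \<and> Q = rect (x + real i * t) y t t))}"

definition strip_cand :: "(int \<times> int) list \<Rightarrow> point set \<Rightarrow> bool" where
  "strip_cand vs Y \<longleftrightarrow> Y \<subseteq> polygon_region vs \<and>
     (\<exists>x y w h. w > 0 \<and> h > 0 \<and> Y = rect x y w h \<and>
        ((w > h \<and> (\<exists>e\<in>poly_edges vs. top_side x y w h \<subseteq> e) \<and>
                  (\<exists>e\<in>poly_edges vs. bottom_side x y w h \<subseteq> e)) \<or>
         (h > w \<and> (\<exists>e\<in>poly_edges vs. left_side x y w h \<subseteq> e) \<and>
                  (\<exists>e\<in>poly_edges vs. right_side x y w h \<subseteq> e))))"

definition strip :: "(int \<times> int) list \<Rightarrow> point set \<Rightarrow> bool" where
  "strip vs Y \<longleftrightarrow> strip_cand vs Y \<and> (\<forall>Z. strip_cand vs Z \<and> Y \<subseteq> Z \<longrightarrow> Z = Y)"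

definition square_cover :: "point set \<Rightarrow> point set set \<Rightarrow> bool" where
  "square_cover P U \<longleftrightarrow> finite U \<and> (\<forall>Q\<in>U. valid_square P Q) \<and> \<Union>U = P"

definition min_square_cover :: "point set \<Rightarrow> point set set \<Rightarrow> bool" where
  "min_square_cover P U \<longleftrightarrow> square_cover P U \<and> (\<forall>V. square_cover P V \<longrightarrow> card U \<le> card V)"

definition minimum_covering :: "point set \<Rightarrow> point set set \<Rightarrow> bool" where
  "minimum_covering P RR \<longleftrightarrow> (\<forall>R\<in>RR. rec_pack P R) \<and>
     min_square_cover P (\<Union>R\<in>RR. ext R) \<and>
     (\<forall>R1\<in>RR. \<forall>R2\<in>RR. R1 \<noteq> R2 \<longrightarrow> ext R1 \<inter> ext R2 = {})"

definition partial_solution :: "point set \<Rightarrow> point set set \<Rightarrow> bool" where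
  "partial_solution P RR \<longleftrightarrow> (\<exists>RR'. minimum_covering P RR' \<and> RR \<subseteq> RR')"

definition overlaps :: "point set \<Rightarrow> point set \<Rightarrow> bool" where
  "overlaps A B \<longleftrightarrow> interior A \<inter> interior B \<noteq> {}"

end

theory Submission
  imports Defs
begin

text \<open>The square \<open>S'\<close> lies in \<open>P\<close>: the box between the right side of \<open>S\<close> and the right
  side of the strip \<open>Y\<close> has its left and right sides in \<open>S\<close> and \<open>Y\<close> and its top and
  bottom sides on the edges \<open>e1\<close> and \<open>e2\<close>; a bounded set whose frontier lies in a region
  bounded by a Jordan curve lies in that region.

  Now take a minimum covering extending \<open>\<R>\<close>. Some square \<open>Q\<close> of its extraction covers
  points of \<open>S'\<close> just right of the common side of \<open>S\<close> and \<open>S'\<close> while starting left of it.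
  The edges \<open>e1\<close>, \<open>e2\<close> are on the boundary of \<open>P\<close> and hence miss the interior of
  \<open>Q\<close>, so \<open>Q\<close> lies between them and therefore inside \<open>S \<union> S'\<close>. Replacing \<open>Q\<close> by
  \<open>S'\<close> gives a covering of no larger size, hence again a minimum one, and the rec-pack
  containing \<open>Q\<close> overlaps \<open>S'\<close>, so it is not in \<open>\<R>\<close>.\<close>

lemma rect_eqD:
  assumes "rect x y w h = rect x' y' w' h'" "0 \<le> w" "0 \<le> h"
  shows "x = x' \<and> y = y' \<and> w = w' \<and> h = h'"
  using assms by (auto simp: rect_def times_eq_iff)

lemma interior_rect: "interior (rect a b w h) = {a<..<a+w} \<times> {b<..<b+h}"
  unfolding rect_def by (simp add: interior_Times)

lemma frontier_box_subset:
  fixes a a' b b' :: real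
  shows "frontier ({a..a'} \<times> {b..b'}) \<subseteq> {a, a'} \<times> {b..b'} \<union> {a..a'} \<times> {b, b'}"
  unfolding frontier_def closure_closed[OF closed_Times[OF closed_real_atLeastAtMost closed_real_atLeastAtMost]]
  by (auto simp: interior_Times)

lemma Inf_fst_rect: "0 \<le> s \<Longrightarrow> Inf (fst ` rect a b s s) = a"
  by (simp add: rect_def)

lemma ext_subset: "Q \<in> ext R \<Longrightarrow> Q \<subseteq> R"
proof -
  assume "Q \<in> ext R"
  then obtain x y t and \<eta> :: nat and i where h: "t > 0" "i < \<eta>"
    "(R = rect x y t (real \<eta> * t) \<and> Q = rect x (y + real i * t) t t) \<or>
     (R = rect x y (real \<eta> * t) t \<and> Q = rect (x + real i * t) y t t)"
    unfolding ext_def by blast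
  have "real i + 1 \<le> real \<eta>" using h(2) by linarith
  then have "(real i + 1) * t \<le> real \<eta> * t" using h(1) by (intro mult_right_mono) auto
  then have "real i * t + t \<le> real \<eta> * t" by (simp add: distrib_right)
  moreover have "0 \<le> real i * t" using h(1) by simp
  ultimately show ?thesis using h(3) unfolding rect_def by auto
qed

lemma ext_square:
  assumes "t > 0" shows "ext (rect a b t t) = {rect a b t t}"
proof
  have "rect a b t t = rect a (b + real (0::nat) * t) t t \<and> rect a b t t = rect a b t (real (1::nat) * t)"
    by simp
  then show "{rect a b t t} \<subseteq> ext (rect a b t t)"
    unfolding ext_def using assms by blast
next
  show "ext (rect a b t t) \<subseteq> {rect a b t t}"
  proof
    fix Q assume "Q \<in> ext (rect a b t t)"
    then obtain x y t' and \<eta> :: nat and i where h: "t' > 0" "i < \<eta>"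
      "(rect a b t t = rect x y t' (real \<eta> * t') \<and> Q = rect x (y + real i * t') t' t') \<or>
       (rect a b t t = rect x y (real \<eta> * t') t' \<and> Q = rect (x + real i * t') y t' t')"
      unfolding ext_def by blast
    then have eq: "a = x \<and> b = y \<and> t = t' \<and> t = real \<eta> * t'"
      using rect_eqD[of a b t t] assms by fastforce
    then have "real \<eta> = 1" using h(1) by (metis less_irrefl mult_cancel_right2)
    then have "i = 0" using h(2) by simp
    with h(3) eq show "Q \<in> {rect a b t t}" by auto
  qed
qed

lemma ext_is_square: "Q \<in> ext R \<Longrightarrow> is_square Q"
  unfolding ext_def is_square_def by blast

lemma ext_singleton: "Q \<in> ext R \<Longrightarrow> ext Q = {Q}"
  using ext_is_square ext_square unfolding is_square_def by metis

lemma valid_square_rec_pack: "valid_square P Q \<Longrightarrow> rec_pack P Q"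
proof -
  assume "valid_square P Q"
  then obtain a b t where "t > 0" "Q = rect a b t t" "Q \<subseteq> P"
    unfolding valid_square_def is_square_def by blast
  moreover have "rect a b t t = rect a b t (real (1::nat) * t)" by simp
  ultimately show ?thesis unfolding rec_pack_def by (metis order_refl)
qed

lemma ext_valid_square:
  assumes "rec_pack P R" "Q \<in> ext R" shows "valid_square P Q"
  using assms ext_subset ext_is_square unfolding rec_pack_def valid_square_def by blast

lemma pathstart_poly_path [simp]: "xs \<noteq> [] \<Longrightarrow> pathstart (poly_path xs) = hd xs"
  and pathfinish_poly_path [simp]: "xs \<noteq> [] \<Longrightarrow> pathfinish (poly_path xs) = last xs"
  by (induction xs rule: poly_path.induct) auto

lemma closed_segment_subset_poly_path:
  "Suc i < length L \<Longrightarrow> closed_segment (L ! i) (L ! Suc i) \<subseteq> path_image (poly_path L)"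
proof (induction L arbitrary: i rule: poly_path.induct)
  case (4 a b c xs)
  then show ?case
    by (cases i) (auto simp: path_image_join)
qed auto

lemma poly_edge_subset_boundary:
  assumes "e \<in> poly_edges vs" shows "e \<subseteq> path_image (boundary_path vs)"
proof -
  obtain i where i: "i < length vs" "e = closed_segment (ipt (vs ! i)) (ipt (nxt vs i))"
    using assms unfolding poly_edges_def by blast
  define L where "L = map ipt vs @ [ipt (hd vs)]"
  have "L ! i = ipt (vs ! i)" using i(1) unfolding L_def by (simp add: nth_append)
  moreover have "L ! Suc i = ipt (nxt vs i)"
  proof (cases "Suc i < length vs")
    case True then show ?thesis unfolding L_def nxt_def by (simp add: nth_append)
  next
    case False
    then have "Suc i = length vs" using i(1) by simp
    then show ?thesis unfolding L_def nxt_def by (cases vs) (simp_all add: nth_append)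
  qed
  ultimately show ?thesis
    using closed_segment_subset_poly_path[of i L] i unfolding boundary_path_def L_def by simp
qed

lemma boundary_path_closed: "vs \<noteq> [] \<Longrightarrow> pathfinish (boundary_path vs) = pathstart (boundary_path vs)"
  by (simp add: boundary_path_def hd_map)

lemma simple_loop_image_subset_closure_outside:
  fixes g :: "real \<Rightarrow> real \<times> real"
  assumes "simple_path g" "pathfinish g = pathstart g"
  shows "path_image g \<subseteq> closure (outside (path_image g))"
proof -
  let ?C = "path_image g"
  have "?C homeomorphic sphere (0::complex) 1"
    using homeomorphic_simple_path_image_circle[OF assms, of 1 0] by simp
  also have "sphere (0::complex) 1 homeomorphic sphere (0::real \<times> real) 1"
    by (rule homeomorphic_spheres') (auto simp: DIM_complex)
  finally have hom: "?C homeomorphic sphere (0::real \<times> real) 1" .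
  obtain z where z: "z \<in> outside ?C"
    using outside_bounded_nonempty bounded_simple_path_image[OF assms(1)] by blast
  define T where "T = connected_component_set (- ?C) z"
  have "T \<in> components (- ?C)"
    unfolding T_def components_def using z outside_no_overlap by blast
  then have "frontier T = ?C" using Jordan_Brouwer_frontier[OF hom] by simp
  moreover have "T \<subseteq> outside ?C" unfolding T_def using z outside_same_component by blast
  ultimately show ?thesis
    unfolding frontier_def using closure_mono by blast
qed

lemma boundary_disjoint_interior_region:
  assumes "ortho_polygon vs"
  shows "path_image (boundary_path vs) \<inter> interior (polygon_region vs) = {}"
proof -
  let ?C = "path_image (boundary_path vs)"
  have "simple_path (boundary_path vs)" "vs \<noteq> []"
    using assms unfolding ortho_polygon_def by auto
  then have "?C \<subseteq> closure (outside ?C)"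
    by (simp add: simple_loop_image_subset_closure_outside boundary_path_closed)
  also have "\<dots> \<subseteq> closure (- polygon_region vs)"
    unfolding polygon_region_def
    by (intro closure_mono) (use inside_Int_outside outside_no_overlap in blast)
  also have "\<dots> = - interior (polygon_region vs)" by (rule closure_complement)
  finally show ?thesis by blast
qed

lemma subset_Un_inside_if_frontier_subset:
  fixes K :: "'a::real_normed_vector set"
  assumes "bounded K" "frontier K \<subseteq> C \<union> inside C"
  shows "K \<subseteq> C \<union> inside C"
proof
  fix q assume "q \<in> K"
  show "q \<in> C \<union> inside C"
  proof (rule ccontr)
    assume "q \<notin> C \<union> inside C"
    then have q: "q \<in> outside C" "q \<notin> C" using union_with_outside by blast+
    define T where "T = connected_component_set (- C) q"
    have "T \<subseteq> outside C" unfolding T_def using q outside_same_component by blast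
    then have "T \<inter> frontier K = {}"
      using assms(2) inside_Int_outside outside_no_overlap by blast
    moreover have "q \<in> T" unfolding T_def using q(2) by simp
    ultimately have "T \<subseteq> K"
      using connected_Int_frontier[of T K] \<open>q \<in> K\<close> unfolding T_def by blast
    then have "bounded T" using assms(1) bounded_subset by blast
    then show False using q(1) unfolding outside_def T_def by simp
  qed
qed

lemma box_subset_polygon_region:
  fixes a a' b b' :: real
  assumes "{a, a'} \<times> {b..b'} \<union> {a..a'} \<times> {b, b'} \<subseteq> polygon_region vs"
  shows "{a..a'} \<times> {b..b'} \<subseteq> polygon_region vs"
proof -
  have "bounded ({a..a'} \<times> {b..b'})" by (simp add: bounded_Times)
  moreover have "frontier ({a..a'} \<times> {b..b'}) \<subseteq> polygon_region vs"
    using frontier_box_subset assms by (rule subset_trans)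
  ultimately show ?thesis
    unfolding polygon_region_def by (rule subset_Un_inside_if_frontier_subset)
qed

lemma horizontal_closed_segment:
  fixes p q u :: real
  assumes "p \<le> u" "u \<le> q" shows "(u, c) \<in> closed_segment (p, c) (q, c)"
proof (cases "p = q")
  case False
  define \<theta> where "\<theta> = (u - p) / (q - p)"
  have "\<theta> * (q - p) = u - p" using False by (simp add: \<theta>_def)
  then have "(1 - \<theta>) * p + \<theta> * q = u" by (simp add: algebra_simps)
  then have "(u, c) = (1 - \<theta>) *\<^sub>R (p, c) + \<theta> *\<^sub>R (q, c)" by (simp add: algebra_simps)
  moreover have "0 \<le> \<theta>" "\<theta> \<le> 1" using assms False unfolding \<theta>_def by (auto simp: divide_le_eq_1)
  ultimately show ?thesis unfolding in_segment by blast
qed (use assms in simp)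

lemma horizontal_snd_eq: "horizontal e \<Longrightarrow> p \<in> e \<Longrightarrow> q \<in> e \<Longrightarrow> snd p = snd q"
  unfolding horizontal_def by metis

lemma poly_edge_horizontal_subset:
  assumes "e \<in> poly_edges vs" "(p, c) \<in> e" "(q, c) \<in> e"
  shows "{p..q} \<times> {c} \<subseteq> e"
proof -
  have "convex e" using assms(1) unfolding poly_edges_def by auto
  then have "closed_segment (p, c) (q, c) \<subseteq> e" using assms(2,3) by (rule closed_segment_subset[rotated 2])
  then show ?thesis using horizontal_closed_segment by fastforce
qed

lemma strip_between_horizontal_edges:
  assumes e1: "e1 \<in> poly_edges vs" "horizontal e1" "(x0, y1) \<in> e1"
    and e2: "e2 \<in> poly_edges vs" "horizontal e2" "(x0, y0) \<in> e2"
    and Y: "strip vs Y" "Y = rect xY yY w h" "top_side xY yY w h \<subseteq> e1" "bottom_side xY yY w h \<subseteq> e2"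
    and "x0 \<le> xY + w"
  shows "Y = rect xY y0 w (y1 - y0)" "0 < w" "Y \<subseteq> polygon_region vs"
    and "{x0..xY + w} \<times> {y0, y1} \<subseteq> e1 \<union> e2"
proof -
  have "strip_cand vs Y" using Y(1) unfolding strip_def by (rule conjunct1)
  then obtain x' y' w' h' where "Y \<subseteq> polygon_region vs" "w' > 0" "h' > 0" "Y = rect x' y' w' h'"
    unfolding strip_cand_def by (elim conjE exE) simp
  moreover have "rect x' y' w' h' = rect xY yY w h" using calculation(4)[symmetric] Y(2) by (rule trans)
  ultimately show "0 < w" "Y \<subseteq> polygon_region vs" using rect_eqD by (metis less_imp_le)+
  then have top: "(xY + w, yY + h) \<in> e1" and bottom: "(xY + w, yY) \<in> e2"
    using Y(3,4) unfolding top_side_def bottom_side_def by auto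
  have "yY + h = y1" using horizontal_snd_eq[OF e1(2) top e1(3)] by simp
  moreover have "yY = y0" using horizontal_snd_eq[OF e2(2) bottom e2(3)] by simp
  ultimately have "h = y1 - y0" by simp
  then show "Y = rect xY y0 w (y1 - y0)" using Y(2) \<open>yY = y0\<close> by simp
  have "{x0..xY + w} \<times> {y1} \<subseteq> e1" "{x0..xY + w} \<times> {y0} \<subseteq> e2"
    using poly_edge_horizontal_subset e1 e2 top bottom \<open>yY + h = y1\<close> \<open>yY = y0\<close> by blast+
  then show "{x0..xY + w} \<times> {y0, y1} \<subseteq> e1 \<union> e2" by blast
qed

lemma rect_confined_by_horizontal_segments:
  assumes "interior (rect a b w h) \<inter> {x0..x1} \<times> {y0, y1} = {}"
    and "0 < w" "x0 < x1" "a < x1" "x0 < a + w" "b < y1" "y0 < b + h"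
  shows "y0 \<le> b \<and> b + h \<le> y1"
proof -
  define u where "u = (max a x0 + min (a + w) x1) / 2"
  have u: "a < u" "u < a + w" "x0 \<le> u" "u \<le> x1"
    using assms(2-5) unfolding u_def by auto
  have "(u, y0) \<notin> interior (rect a b w h)" "(u, y1) \<notin> interior (rect a b w h)"
    using assms(1) u by auto
  then have "\<not> b < y0" "\<not> y1 < b + h"
    using u assms(6,7) unfolding interior_rect by auto
  then show ?thesis by linarith
qed

lemma finite_square_cover_straddles:
  assumes "finite U" "\<forall>Q\<in>U. is_square Q" "{x0<..<x1} \<times> {v} \<subseteq> \<Union>U" "x0 < x1"
  obtains a b s where "rect a b s s \<in> U" "0 < s" "a \<le> x0" "x0 < a + s" "b \<le> v" "v \<le> b + s"
proof -
  \<comment> \<open>\<open>m\<close> is the leftmost left edge of a square of \<open>U\<close> lying right of \<open>x0\<close>, so a square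
    covering a point of the segment left of \<open>m\<close> must start at or left of \<open>x0\<close>.\<close>
  define m where "m = Min (insert x1 {l \<in> (\<lambda>Q. Inf (fst ` Q)) ` U. x0 < l})"
  have m: "x0 < m" "m \<le> x1" using assms(1,4) unfolding m_def by auto
  define t where "t = (x0 + m) / 2"
  have "(t, v) \<in> {x0<..<x1} \<times> {v}" using m unfolding t_def by auto
  then have "(t, v) \<in> \<Union>U" using assms(3) by blast
  then obtain Q where "Q \<in> U" "(t, v) \<in> Q" by blast
  moreover obtain a b s where Q: "Q = rect a b s s" "0 < s"
    using assms(2) \<open>Q \<in> U\<close> unfolding is_square_def by blast
  ultimately have pt: "a \<le> t" "t \<le> a + s" "b \<le> v" "v \<le> b + s" unfolding rect_def by auto
  have "a \<le> x0"
  proof (rule ccontr)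
    assume "\<not> a \<le> x0"
    then have "a \<in> {l \<in> (\<lambda>Q. Inf (fst ` Q)) ` U. x0 < l}"
      using \<open>Q \<in> U\<close> Inf_fst_rect[of s a b] Q by force
    then have "m \<le> a" using assms(1) unfolding m_def by simp
    then show False using pt(1) m(1) unfolding t_def by simp
  qed
  moreover have "x0 < a + s" using pt(2) m(1) unfolding t_def by simp
  ultimately show thesis using that \<open>Q \<in> U\<close> Q pt by blast
qed

lemma min_square_cover_exchange:
  assumes U: "min_square_cover P U" and "Q \<in> U" "valid_square P S"
    and covered: "Q \<subseteq> S \<union> \<Union>(U - {Q})"
  shows "min_square_cover P (insert S (U - {Q}))" and "S \<notin> U - {Q}"
proof -
  have fin: "finite U" and valid: "\<forall>Q\<in>U. valid_square P Q" and "\<Union>U = P"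
    and min: "\<And>V. square_cover P V \<Longrightarrow> card U \<le> card V"
    using U unfolding min_square_cover_def square_cover_def by auto
  have "\<Union>(insert S (U - {Q})) = P"
    using \<open>\<Union>U = P\<close> \<open>valid_square P S\<close> covered \<open>Q \<in> U\<close> unfolding valid_square_def by blast
  then have cover: "square_cover P (insert S (U - {Q}))"
    unfolding square_cover_def using fin valid \<open>valid_square P S\<close> by auto
  have card: "card (U - {Q}) < card U" using fin \<open>Q \<in> U\<close> by (rule card_Diff1_less)
  then show "S \<notin> U - {Q}"
    using min[OF cover] by (metis insert_absorb leD)
  have "card (insert S (U - {Q})) \<le> card U"
    using card fin by (simp add: card_insert_if)
  then show "min_square_cover P (insert S (U - {Q}))"
    using cover min unfolding min_square_cover_def by (meson order_trans)
qed

lemma minimum_covering_exchange: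
  assumes RR: "minimum_covering P RR" and "R \<in> RR" "Q \<in> ext R" "valid_square P S"
    and covered: "Q \<subseteq> S \<union> \<Union>((\<Union>R\<in>RR. ext R) - {Q})"
  shows "minimum_covering P ((RR - {R}) \<union> insert S (ext R - {Q}))"
proof -
  let ?U = "\<Union>R\<in>RR. ext R" and ?N = "insert S (ext R - {Q})"
  have packs: "\<forall>R\<in>RR. rec_pack P R" and "min_square_cover P ?U"
    and disj: "\<forall>R1\<in>RR. \<forall>R2\<in>RR. R1 \<noteq> R2 \<longrightarrow> ext R1 \<inter> ext R2 = {}"
    using RR unfolding minimum_covering_def by auto
  have "Q \<in> ?U" using \<open>R \<in> RR\<close> \<open>Q \<in> ext R\<close> by blast
  note exch = min_square_cover_exchange[OF \<open>min_square_cover P ?U\<close> this \<open>valid_square P S\<close> covered]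
  have ext_other: "ext R' \<subseteq> ?U - {Q}" if "R' \<in> RR - {R}" for R'
    using that disj \<open>R \<in> RR\<close> \<open>Q \<in> ext R\<close> by blast
  have ext_S: "ext S = {S}"
    using \<open>valid_square P S\<close> ext_square unfolding valid_square_def is_square_def by metis
  have single: "ext R' = {R'}" if "R' \<in> ?N" for R'
    using that ext_S ext_singleton by blast
  have "(\<Union>R'\<in>?N. ext R') = ?N" using single by auto
  moreover have "?U - {Q} = (\<Union>R'\<in>RR - {R}. ext R') \<union> (ext R - {Q})"
    using ext_other \<open>R \<in> RR\<close> by blast
  ultimately have ext_union: "(\<Union>R'\<in>(RR - {R}) \<union> ?N. ext R') = insert S (?U - {Q})"
    by (simp only: UN_Un) auto
  have packs': "\<forall>R'\<in>(RR - {R}) \<union> ?N. rec_pack P R'"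
  proof
    fix R' assume R': "R' \<in> (RR - {R}) \<union> ?N"
    have "valid_square P R'" if "R' \<in> ?N"
      using that \<open>valid_square P S\<close> ext_valid_square packs \<open>R \<in> RR\<close> \<open>Q \<in> ext R\<close> by blast
    then show "rec_pack P R'" using R' packs valid_square_rec_pack by blast
  qed
  have sep: "R' \<notin> ext R''" if "R'' \<in> RR - {R}" "R' \<in> ?N" for R' R''
  proof
    assume "R' \<in> ext R''"
    then have "R' \<noteq> S" using ext_other[OF that(1)] exch(2) by blast
    then have "R' \<in> ext R" using that(2) by blast
    then show False using disj \<open>R \<in> RR\<close> that(1) \<open>R' \<in> ext R''\<close> by blast
  qed
  have disj': "\<forall>R1\<in>(RR - {R}) \<union> ?N. \<forall>R2\<in>(RR - {R}) \<union> ?N. R1 \<noteq> R2 \<longrightarrow> ext R1 \<inter> ext R2 = {}"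
  proof (intro ballI impI)
    fix R1 R2 assume R12: "R1 \<in> (RR - {R}) \<union> ?N" "R2 \<in> (RR - {R}) \<union> ?N" and "R1 \<noteq> R2"
    consider "R1 \<in> ?N" "R2 \<in> ?N" | "R1 \<in> RR - {R}" "R2 \<in> RR - {R}"
      | "R1 \<in> RR - {R}" "R2 \<in> ?N" | "R1 \<in> ?N" "R2 \<in> RR - {R}"
      using R12 by blast
    then show "ext R1 \<inter> ext R2 = {}"
    proof cases
      case 1 then show ?thesis using single[OF 1(1)] single[OF 1(2)] \<open>R1 \<noteq> R2\<close> by simp
    next
      case 2 then show ?thesis using disj \<open>R1 \<noteq> R2\<close> by blast
    next
      case 3 then show ?thesis using single[OF 3(2)] sep[OF 3] by simp
    next
      case 4 then show ?thesis using single[OF 4(1)] sep[OF 4(2,1)] by auto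
    qed
  qed
  show ?thesis
    unfolding minimum_covering_def ext_union by (intro conjI packs' exch(1) disj')
qed

lemma partial_solution_insert_square:
  assumes "partial_solution P RR" "valid_square P S" "\<forall>R\<in>RR. \<not> overlaps R S"
    and replaceable: "\<And>U. square_cover P U \<Longrightarrow> (\<Union>R\<in>RR. ext R) \<subseteq> U \<Longrightarrow>
                        \<exists>Q\<in>U. overlaps Q S \<and> Q \<subseteq> S \<union> \<Union>(U - {Q})"
  shows "partial_solution P (insert S RR)"
proof -
  obtain RR' where RR': "minimum_covering P RR'" "RR \<subseteq> RR'"
    using assms(1) unfolding partial_solution_def by blast
  let ?U = "\<Union>R\<in>RR'. ext R"
  have "square_cover P ?U" using RR'(1) unfolding minimum_covering_def min_square_cover_def by blast
  moreover have "(\<Union>R\<in>RR. ext R) \<subseteq> ?U" using RR'(2) by blast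
  ultimately obtain Q where "Q \<in> ?U" "overlaps Q S" and covered: "Q \<subseteq> S \<union> \<Union>(?U - {Q})"
    using replaceable by blast
  then obtain R where R: "R \<in> RR'" "Q \<in> ext R" by blast
  have "interior Q \<subseteq> interior R" using ext_subset[OF R(2)] by (rule interior_mono)
  then have "R \<notin> RR" using \<open>overlaps Q S\<close> assms(3) unfolding overlaps_def by blast
  then have "insert S RR \<subseteq> (RR' - {R}) \<union> insert S (ext R - {Q})" using RR'(2) by blast
  then show ?thesis
    using minimum_covering_exchange[OF RR'(1) R assms(2) covered]
    unfolding partial_solution_def by blast
qed

lemma square_cover_replaceable_square:
  assumes U: "square_cover P U" "rect x y d d \<in> U" and "rect (x + d) y d d \<subseteq> P" "0 < d"
    and lines: "interior P \<inter> {x + d..x + 2 * d} \<times> {y, y + d} = {}"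
  shows "\<exists>Q\<in>U. overlaps Q (rect (x + d) y d d) \<and> Q \<subseteq> rect (x + d) y d d \<union> \<Union>(U - {Q})"
proof -
  have "finite U" "\<forall>Q\<in>U. is_square Q"
    using U(1) unfolding square_cover_def valid_square_def by auto
  moreover have "{x + d<..<x + 2 * d} \<times> {y + d / 2} \<subseteq> \<Union>U"
    using U(1) assms(3,4) unfolding square_cover_def rect_def by auto
  moreover have "x + d < x + 2 * d" using assms(4) by simp
  ultimately obtain a b s where Q: "rect a b s s \<in> U" "0 < s" "a \<le> x + d" "x + d < a + s"
      "b \<le> y + d / 2" "y + d / 2 \<le> b + s"
    by (rule finite_square_cover_straddles)
  have "rect a b s s \<subseteq> P"
    using U(1) Q(1) unfolding square_cover_def valid_square_def by blast
  then have "interior (rect a b s s) \<subseteq> interior P" by (rule interior_mono)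
  then have "interior (rect a b s s) \<inter> {x + d..x + 2 * d} \<times> {y, y + d} = {}"
    using lines by blast
  then have "y \<le> b \<and> b + s \<le> y + d"
    by (rule rect_confined_by_horizontal_segments) (use Q assms(4) in linarith)+
  then have "s \<le> d" "x \<le> a" "a + s \<le> x + 2 * d" "y \<le> b" "b + s \<le> y + d"
    using Q by linarith+
  have "rect a b s s \<subseteq> rect x y d d \<union> rect (x + d) y d d"
  proof
    fix p assume "p \<in> rect a b s s"
    then obtain u v where "p = (u, v)" "a \<le> u" "u \<le> a + s" "b \<le> v" "v \<le> b + s"
      unfolding rect_def by auto
    then show "p \<in> rect x y d d \<union> rect (x + d) y d d"
      using \<open>x \<le> a\<close> \<open>a + s \<le> x + 2 * d\<close> \<open>y \<le> b\<close> \<open>b + s \<le> y + d\<close>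
      by (cases "u \<le> x + d") (auto simp: rect_def)
  qed
  moreover have "rect a b s s \<noteq> rect x y d d"
  proof -
    have "(a + s, b) \<in> rect a b s s" "(a + s, b) \<notin> rect x y d d"
      using Q(2,4) by (auto simp: rect_def)
    then show ?thesis by blast
  qed
  moreover have "((x + d + a + s) / 2, b + s / 2) \<in> interior (rect a b s s) \<inter> interior (rect (x + d) y d d)"
    unfolding interior_rect using Q(2-4) \<open>a + s \<le> x + 2 * d\<close> \<open>y \<le> b\<close> \<open>b + s \<le> y + d\<close> by auto
  ultimately show ?thesis
    using Q(1) U(2) unfolding overlaps_def by blast
qed

theorem lemma4p12:
  fixes vs :: "(int \<times> int) list" and P :: "(real \<times> real) set"
    and x y d :: real and e1 e2 Y :: "(real \<times> real) set"
    and RR :: "(real \<times> real) set set"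
  assumes poly: "ortho_polygon vs" and P_def: "P = polygon_region vs"
    and d_pos: "d > 0"
    and S_max: "maximal_square P (rect x y d d)"
    and e1: "e1 \<in> poly_edges vs" "horizontal e1"
    and e2: "e2 \<in> poly_edges vs" "horizontal e2"
    and top_ov: "infinite (top_side x y d d \<inter> e1)"
    and bot_ov: "infinite (bottom_side x y d d \<inter> e2)"
    and tr: "(x + d, y + d) \<in> e1"
    and br: "(x + d, y) \<in> e2"
    and Ystrip: "strip vs Y"
    and Ybetween: "\<exists>xY yY w h. Y = rect xY yY w h \<and> w > h \<and>
                     top_side xY yY w h \<subseteq> e1 \<and> bottom_side xY yY w h \<subseteq> e2 \<and>
                     (xY + w) - (x + d) > d"
    and RR_ps: "partial_solution P RR"
    and S_in: "rect x y d d \<in> RR"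
    and no_ov: "\<forall>R\<in>RR. \<not> overlaps R (rect (x + d) y d d)"
  shows "partial_solution P (insert (rect (x + d) y d d) RR)"
proof -
  let ?S' = "rect (x + d) y d d"
  have SP: "rect x y d d \<subseteq> P" using S_max unfolding maximal_square_def valid_square_def by blast
  obtain xY yY w h where Y: "Y = rect xY yY w h" "top_side xY yY w h \<subseteq> e1"
      "bottom_side xY yY w h \<subseteq> e2" "x + 2 * d < xY + w"
    using Ybetween by auto
  moreover have "x + d \<le> xY + w" using Y(4) d_pos by simp
  ultimately have Y_eq: "Y = rect xY y w d" and "0 < w" and YP: "Y \<subseteq> P"
    and edges: "{x + d..xY + w} \<times> {y, y + d} \<subseteq> e1 \<union> e2"
    using strip_between_horizontal_edges[OF e1 tr e2 br Ystrip] unfolding P_def by auto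
  have C: "e1 \<union> e2 \<subseteq> path_image (boundary_path vs)"
    using poly_edge_subset_boundary e1(1) e2(1) by blast
  have "{x + d, xY + w} \<times> {y..y + d} \<subseteq> rect x y d d \<union> Y"
    using \<open>0 < w\<close> d_pos unfolding Y_eq rect_def by auto
  then have "{x + d, xY + w} \<times> {y..y + d} \<union> {x + d..xY + w} \<times> {y, y + d} \<subseteq> polygon_region vs"
    using SP YP edges C unfolding P_def polygon_region_def by blast
  then have "{x + d..xY + w} \<times> {y..y + d} \<subseteq> P"
    unfolding P_def by (rule box_subset_polygon_region)
  then have S'P: "?S' \<subseteq> P" using Y(4) unfolding rect_def by auto
  have "{x + d..x + 2 * d} \<times> {y, y + d} \<subseteq> {x + d..xY + w} \<times> {y, y + d}"
    using Y(4) by auto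
  then have lines: "interior P \<inter> {x + d..x + 2 * d} \<times> {y, y + d} = {}"
    using boundary_disjoint_interior_region[OF poly] C edges unfolding P_def by blast
  have "valid_square P ?S'" using S'P d_pos unfolding valid_square_def is_square_def by blast
  then show ?thesis
  proof (rule partial_solution_insert_square[OF RR_ps _ no_ov])
    fix U assume U: "square_cover P U" "(\<Union>R\<in>RR. ext R) \<subseteq> U"
    then have "rect x y d d \<in> U" using ext_square[OF d_pos] S_in by blast
    with U(1) show "\<exists>Q\<in>U. overlaps Q ?S' \<and> Q \<subseteq> ?S' \<union> \<Union>(U - {Q})"
      using square_cover_replaceable_square S'P d_pos lines by blast
  qed
qed

end
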